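(* Let $(\tau_\Sigma,\mathbb{B}_\Sigma)_\Sigma$ be a family indexed by finite sets $\Sigma$ with at least two elements, where $\tau_\Sigma$ is a topology on $T_\Sigma^\omega$ and $\mathbb{B}_\Sigma$ a basis of $\tau_\Sigma$, satisfying: (P1) $\mathbb{B}_\Sigma$ contains every basic clopen set $N_t$, $t$ a finite $\Sigma$-labelled binary tree; (P2) $\mathbb{B}_\Sigma$ is closed under finite unions and intersections; (P3) if $\Gamma$ is a finite set with at least two elements and $L\in\mathbb{B}_{\Sigma\times\Gamma}$ then $\pi_0[L]\in\mathbb{B}_\Sigma$; (P4) for each $L\in\mathbb{B}_\Sigma$ there is $C\in\mathbb{B}_{\Sigma\times 2}$ with $C\subseteq T_\Sigma^\omega\times\mathbb{T}_\infty$, $C$ the intersection of a closed subset of $T_\Sigma^\omega\times T_2^\omega$ with $T_\Sigma^\omega\times\mathbb{T}_\infty$, and $L=\pi_0[C]$. Then every $\tau_\Sigma$ is strong Choquet.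
   Context: $T_\Sigma^\omega$ is the set of functions $t:\{l,r\}^*\to\Sigma$ (infinite binary $\Sigma$-labelled trees) with the Cantor topology given by the distance $2^{-n}$, $n$ the least length of a node where two trees differ. A finite tree is a map $s:S\to\Sigma$ with $S\subseteq\{l,r\}^*$ finite and prefix-closed; $N_s$ is the set of $t\in T_\Sigma^\omega$ extending $s$. $T_{\Sigma\times\Gamma}^\omega$ is identified with $T_\Sigma^\omega\times T_\Gamma^\omega$ nodewise and $\pi_0$ is the first projection. A path of $t$ is the sequence of labels $t(u_0)t(u_1)\cdots$ along an infinite branch $u_0\sqsubset u_1\sqsubset\cdots$ with $u_0$ the root and each $u_{i+1}$ a child of $u_i$. $2=\{0,1\}$ and $\mathbb{T}_\infty$ is the set of $t\in T_2^\omega$ such that every path of $t$ contains infinitely many $1$'s. Strong Choquet: nonempty and Player 2 has a winning strategy in the strong Choquet game (Player 1 plays open $U_i\ni x_i$ with $U_i\subseteq V_{i-1}$, Player 2 plays open $V_i$ with $x_i\in V_i\subseteq U_i$, Player 2 wins if $\bigcap_iV_i\neq\emptyset$). *)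

theory Defs
  imports "HOL-Analysis.Analysis"
begin

(* Nodes of the binary tree are bool lists (False = l, True = r). *)

type_synonym tree = "bool list \<Rightarrow> nat"

definition trees :: "nat set \<Rightarrow> tree set" where
  "trees A = {t. \<forall>u. t u \<in> A}"

definition prod_alph :: "nat set \<Rightarrow> nat set \<Rightarrow> nat set" where
  "prod_alph A G = prod_encode ` (A \<times> G)"

definition pi0 :: "tree \<Rightarrow> tree" where
  "pi0 t = (\<lambda>u. fst (prod_decode (t u)))"

definition pi1 :: "tree \<Rightarrow> tree" where
  "pi1 t = (\<lambda>u. snd (prod_decode (t u)))"

definition two :: "nat set" where
  "two = {0, 1}"

(* basic clopen set N_s of a finite A-labelled tree s with (finite, prefix-closed) domain D *)
definition finite_tree :: "nat set \<Rightarrow> bool list set \<Rightarrow> tree \<Rightarrow> bool" where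
  "finite_tree A D s \<longleftrightarrow> finite D \<and> (\<forall>u v. u @ v \<in> D \<longrightarrow> u \<in> D) \<and> (\<forall>u\<in>D. s u \<in> A)"

definition basic_nbhd :: "nat set \<Rightarrow> bool list set \<Rightarrow> tree \<Rightarrow> tree set" where
  "basic_nbhd A D s = {t \<in> trees A. \<forall>u\<in>D. t u = s u}"

(* closed in the Cantor topology (metric 2^-n): contains all its limit points *)
definition cantor_closed :: "nat set \<Rightarrow> tree set \<Rightarrow> bool" where
  "cantor_closed A F \<longleftrightarrow> F \<subseteq> trees A \<and>
     (\<forall>t\<in>trees A. (\<forall>n. \<exists>f\<in>F. \<forall>u. length u < n \<longrightarrow> f u = t u) \<longrightarrow> t \<in> F)"

(* T_infinity: every path contains infinitely many 1's; a branch is given by its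
   direction sequence b, its n-th node being map b [0..<n] *)
definition T_inf :: "tree set" where
  "T_inf = {t \<in> trees two. \<forall>b :: nat \<Rightarrow> bool. infinite {n. t (map b [0..<n]) = 1}}"

(* T_A^omega x T_infinity inside T_{A x 2}^omega *)
definition times_T_inf :: "nat set \<Rightarrow> tree set" where
  "times_T_inf A = {t \<in> trees (prod_alph A two). pi1 t \<in> T_inf}"

definition is_basis_of :: "'a set set \<Rightarrow> 'a topology \<Rightarrow> bool" where
  "is_basis_of B X \<longleftrightarrow> (\<forall>U\<in>B. openin X U) \<and>
     (\<forall>U. openin X U \<longrightarrow> (\<exists>F\<subseteq>B. \<Union>F = U))"

(* strong Choquet game: player 2's strategy sigma sees the history (x_0,U_0),...,(x_n,U_n) *)
definition strong_choquet :: "'a topology \<Rightarrow> bool" where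
  "strong_choquet X \<longleftrightarrow> topspace X \<noteq> {} \<and>
    (\<exists>\<sigma> :: ('a \<times> 'a set) list \<Rightarrow> 'a set.
      \<forall>(x :: nat \<Rightarrow> 'a) (U :: nat \<Rightarrow> 'a set).
        let V = (\<lambda>n. \<sigma> (map (\<lambda>i. (x i, U i)) [0..<Suc n]));
            legal = (\<lambda>n. openin X (U n) \<and> x n \<in> U n \<and> (\<forall>m. n = Suc m \<longrightarrow> U n \<subseteq> V m))
        in (\<forall>n. (\<forall>i\<le>n. legal i) \<longrightarrow> openin X (V n) \<and> x n \<in> V n \<and> V n \<subseteq> U n) \<and>
           ((\<forall>n. legal n) \<longrightarrow> \<Inter>(range V) \<noteq> {}))"

end

theory Submission
  imports Defs
begin

(* Player 2 answers a move (x, U) with a basic set C of the product alphabet that projects into U,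
   contains a lift of x and is closed relative to T_A x T_inf (P4).  For every earlier move k she
   keeps a lift of the current point in C_k and demands that later lifts agree with it on the nodes
   above which the second coordinate has at most n ones.  Since every path of that coordinate
   carries infinitely many ones, this node set is finite by Koenig's lemma, so the demand is a basic
   clopen set and the projected intersection is a basic open set (P1-P3).  Along a legal play the
   lifts converge; the limit still has infinitely many ones on every path and, C_k being relatively
   closed, lies in C_k, so its projection lies in all of Player 2's answers. *)

definition ones_count :: "tree \<Rightarrow> bool list \<Rightarrow> nat" where
  "ones_count t u = card {i. i < length u \<and> t (take i u) = 1}"

definition few_ones :: "nat \<Rightarrow> tree \<Rightarrow> bool list set" where
  "few_ones j t = {u. ones_count t u < j}"

lemma ones_count_le_length: "ones_count t u \<le> length u"
proof -
  have "ones_count t u \<le> card {..<length u}"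
    unfolding ones_count_def by (rule card_mono) auto
  then show ?thesis by simp
qed

lemma ones_count_append_ge: "ones_count t u \<le> ones_count t (u @ v)"
  unfolding ones_count_def by (rule card_mono) auto

lemma ones_count_cong:
  "(\<And>i. i < length u \<Longrightarrow> t' (take i u) = t (take i u)) \<Longrightarrow> ones_count t' u = ones_count t u"
  unfolding ones_count_def by (metis (mono_tags, lifting) Collect_cong)

lemma ones_count_branch:
  "ones_count t (map b [0..<n]) = card {i. i < n \<and> t (map b [0..<i]) = 1}"
proof -
  have "take i (map b [0..<n]) = map b [0..<i]" if "i < n" for i
    using that by (simp add: take_map)
  then show ?thesis
    unfolding ones_count_def by (intro arg_cong[where f = card] Collect_cong) auto
qed

lemma few_ones_prefix: "u @ v \<in> few_ones j t \<Longrightarrow> u \<in> few_ones j t"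
  using ones_count_append_ge[of t u v] by (auto simp: few_ones_def)

lemma few_ones_short: "length u < j \<Longrightarrow> u \<in> few_ones j t"
  using ones_count_le_length[of t u] by (auto simp: few_ones_def)

lemma few_ones_mono: "j \<le> j' \<Longrightarrow> few_ones j t \<subseteq> few_ones j' t"
  by (auto simp: few_ones_def)

lemma few_ones_cong:
  assumes agree: "\<And>u. u \<in> few_ones j t \<Longrightarrow> t' u = t u"
  shows "few_ones j t' = few_ones j t"
proof -
  have prefixes_agree: "t' (take i u) = t (take i u)" if "u \<in> few_ones j t" for u i
    using agree few_ones_prefix that by (metis append_take_drop_id)
  have "u \<in> few_ones j t" if "u \<in> few_ones j t'" for u
    using that
  proof (induction u rule: rev_induct)
    case Nil then show ?case by (simp add: few_ones_def ones_count_def)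
  next
    case (snoc a u)
    then have "u \<in> few_ones j t" using few_ones_prefix by blast
    then have "ones_count t' (u @ [a]) = ones_count t (u @ [a])"
      by (intro ones_count_cong) (simp add: prefixes_agree take_Cons' take_append)
    then show ?case using snoc.prems by (simp add: few_ones_def)
  qed
  moreover have "u \<in> few_ones j t'" if "u \<in> few_ones j t" for u
    using that ones_count_cong[of u t' t] prefixes_agree by (simp add: few_ones_def)
  ultimately show ?thesis by blast
qed

lemma koenig:
  fixes S :: "bool list set"
  assumes infinite: "infinite S" and prefix_closed: "\<And>u v. u @ v \<in> S \<Longrightarrow> u \<in> S"
  shows "\<exists>b. \<forall>n. map b [0..<n] \<in> S"
proof -
  define good where "good u \<longleftrightarrow> infinite {v. u @ v \<in> S}" for u
  have good_Nil: "good []" using infinite by (simp add: good_def)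
  have good_extend: "good (u @ [good (u @ [True])])" if "good u" for u
  proof (rule ccontr)
    assume not_good: "\<not> good (u @ [good (u @ [True])])"
    then have "\<not> good (u @ [True])" by fastforce
    with not_good have "\<not> good (u @ [c])" for c by (cases c) simp_all
    then have "finite {w. (u @ [c]) @ w \<in> S}" for c by (simp add: good_def)
    then have "finite (insert [] (\<Union>c. (Cons c) ` {w. (u @ [c]) @ w \<in> S}))" by simp
    moreover have "{v. u @ v \<in> S} \<subseteq>
        insert [] (\<Union>c. (Cons c) ` {w. (u @ [c]) @ w \<in> S})"
    proof
      fix v assume "v \<in> {v. u @ v \<in> S}"
      then show "v \<in> insert [] (\<Union>c. (Cons c) ` {w. (u @ [c]) @ w \<in> S})"
        by (cases v) auto
    qed
    ultimately have "finite {v. u @ v \<in> S}"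
      by (rule finite_subset[rotated])
    then show False using that by (simp add: good_def)
  qed
  define p where "p = rec_nat [] (\<lambda>_ u. u @ [good (u @ [True])])"
  have good_p: "good (p n)" for n
    by (induction n) (simp_all add: p_def good_Nil good_extend)
  define b where "b n = good (p n @ [True])" for n
  have branch_p: "map b [0..<n] = p n" for n
    by (induction n) (simp_all add: p_def b_def)
  have "p n \<in> S" for n
  proof -
    from good_p[of n] obtain v where "p n @ v \<in> S"
      unfolding good_def using not_finite_existsD by blast
    then show ?thesis using prefix_closed by blast
  qed
  then show ?thesis by (intro exI[of _ b]) (simp add: branch_p)
qed

lemma few_ones_finite:
  assumes "\<And>b. infinite {n. t (map b [0..<n]) = 1}"
  shows "finite (few_ones j t)"
proof (rule ccontr)
  assume "infinite (few_ones j t)"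
  then obtain b where b: "\<And>n. map b [0..<n] \<in> few_ones j t"
    using koenig few_ones_prefix by metis
  obtain F where F: "F \<subseteq> {n. t (map b [0..<n]) = 1}" "finite F" "card F = j"
    using assms infinite_arbitrarily_large by blast
  obtain N where "F \<subseteq> {..<N}" using finite_nat_bounded F(2) by blast
  with F(1) have "F \<subseteq> {i. i < N \<and> t (map b [0..<i]) = 1}" by auto
  then have "j \<le> ones_count t (map b [0..<N])"
    unfolding ones_count_branch using F(3) card_mono
    by (metis (no_types) finite_Collect_conjI finite_Collect_less_nat)
  with b[of N] show False by (simp add: few_ones_def)
qed

lemma branch_infinite_ones:
  assumes "\<And>j. finite (few_ones j t)"
  shows "infinite {n. t (map b [0..<n]) = 1}"
proof
  assume finite_ones: "finite {n. t (map b [0..<n]) = 1}"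
  define j where "j = Suc (card {n. t (map b [0..<n]) = 1})"
  have "inj (\<lambda>n. map b [0..<n])"
    by (rule injI) (metis diff_zero length_map length_upt)
  then have "infinite (range (\<lambda>n. map b [0..<n]))"
    using finite_imageD by blast
  then obtain N where "map b [0..<N] \<notin> few_ones j t"
    using assms[of j] finite_subset by (metis image_subsetI)
  then have "j \<le> card {i. i < N \<and> t (map b [0..<i]) = 1}"
    by (simp add: few_ones_def ones_count_branch)
  moreover have "card {i. i < N \<and> t (map b [0..<i]) = 1} < j"
    unfolding j_def by (intro le_imp_less_Suc card_mono[OF finite_ones]) blast
  ultimately show False by simp
qed

lemma T_inf_iff_few_ones_finite: "t \<in> T_inf \<longleftrightarrow> t \<in> trees two \<and> (\<forall>j. finite (few_ones j t))"
  unfolding T_inf_def using few_ones_finite branch_infinite_ones by blast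

lemma trees_prod_alph_pi1:
  assumes "z \<in> trees (prod_alph A G)"
  shows "pi1 z \<in> trees G"
proof -
  have "snd (prod_decode (z u)) \<in> G" for u
  proof -
    have "z u \<in> prod_encode ` (A \<times> G)"
      using assms by (simp add: trees_def prod_alph_def)
    then obtain a b where "b \<in> G" "z u = prod_encode (a, b)" by blast
    then show ?thesis by simp
  qed
  then show ?thesis by (simp add: trees_def pi1_def)
qed

locale tree_fusion =
  fixes A :: "nat set"
begin

abbreviation A2 :: "nat set" where
  "A2 \<equiv> prod_alph A two"

definition rel_closed :: "tree set \<Rightarrow> bool" where
  "rel_closed C \<longleftrightarrow> (\<exists>F. cantor_closed A2 F \<and> C = F \<inter> times_T_inf A)"

definition nbhd :: "tree \<Rightarrow> nat \<Rightarrow> tree set" where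
  "nbhd z j = basic_nbhd A2 (few_ones j (pi1 z)) z"

lemma few_ones_pi1_eq: "z' \<in> nbhd z j \<Longrightarrow> few_ones j (pi1 z') = few_ones j (pi1 z)"
  by (rule few_ones_cong) (simp add: nbhd_def basic_nbhd_def pi1_def)

lemma nbhd_eq: "z' \<in> nbhd z j \<Longrightarrow> nbhd z' j = nbhd z j"
  using few_ones_pi1_eq[of z' z j] by (auto simp: nbhd_def basic_nbhd_def)

lemma nbhd_antimono: "j \<le> j' \<Longrightarrow> nbhd z j' \<subseteq> nbhd z j"
  using few_ones_mono[of j j'] by (auto simp: nbhd_def basic_nbhd_def)

definition choose_lift :: "tree set \<Rightarrow> tree \<Rightarrow> tree" where
  "choose_lift C y = (SOME z. z \<in> C \<and> pi0 z = y)"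

lemma choose_lift:
  assumes "y \<in> pi0 ` C"
  shows "choose_lift C y \<in> C \<and> pi0 (choose_lift C y) = y"
proof -
  from assms obtain z where "z \<in> C \<and> pi0 z = y" by blast
  then show ?thesis unfolding choose_lift_def by (rule someI[where P = "\<lambda>z. z \<in> C \<and> pi0 z = y"])
qed

fun witness :: "(nat \<Rightarrow> tree) \<Rightarrow> (nat \<Rightarrow> tree set) \<Rightarrow> nat \<Rightarrow> nat \<Rightarrow> tree" where
  "witness x C 0 k = choose_lift (C 0) (x 0)"
| "witness x C (Suc n) k =
    (if k \<le> n then choose_lift (C k \<inter> nbhd (witness x C n k) (Suc n)) (x (Suc n))
     else choose_lift (C (Suc n)) (x (Suc n)))"

definition response :: "(nat \<Rightarrow> tree) \<Rightarrow> (nat \<Rightarrow> tree set) \<Rightarrow> nat \<Rightarrow> tree set" where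
  "response x C n = (\<Inter>k\<le>n. pi0 ` (C k \<inter> nbhd (witness x C n k) (Suc n)))"

definition consistent_move :: "(nat \<Rightarrow> tree) \<Rightarrow> (nat \<Rightarrow> tree set) \<Rightarrow> nat \<Rightarrow> bool" where
  "consistent_move x C n \<longleftrightarrow> rel_closed (C n) \<and> x n \<in> pi0 ` C n \<and>
     (\<forall>m. n = Suc m \<longrightarrow> x n \<in> response x C m)"

lemma rel_closed_subset: "rel_closed C \<Longrightarrow> C \<subseteq> times_T_inf A"
  by (auto simp: rel_closed_def)

lemma witness_cong:
  "(\<And>i. i \<le> n \<Longrightarrow> x i = x' i \<and> C i = C' i) \<Longrightarrow> witness x C n k = witness x' C' n k"
  by (induction n arbitrary: k) auto

lemma response_cong:
  "(\<And>i. i \<le> n \<Longrightarrow> x i = x' i \<and> C i = C' i) \<Longrightarrow> response x C n = response x' C' n"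
  unfolding response_def using witness_cong[of n x x' C C'] by (intro INF_cong) auto

lemma response_subset: "response x C n \<subseteq> pi0 ` C n"
  unfolding response_def by blast

lemma witness_lifts:
  assumes "\<And>i. i \<le> n \<Longrightarrow> consistent_move x C i" "k \<le> n"
  shows "witness x C n k \<in> C k \<and> pi0 (witness x C n k) = x n"
  using assms
proof (induction n arbitrary: k)
  case 0
  then show ?case using choose_lift[of "x 0"] by (simp add: consistent_move_def)
next
  case (Suc n)
  have "consistent_move x C (Suc n)" using Suc.prems by blast
  then have "x (Suc n) \<in> pi0 ` C (Suc n)" "x (Suc n) \<in> response x C n"
    by (simp_all add: consistent_move_def)
  show ?case
  proof (cases "k \<le> n")
    case True
    with \<open>x (Suc n) \<in> response x C n\<close>
    have "x (Suc n) \<in> pi0 ` (C k \<inter> nbhd (witness x C n k) (Suc n))"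
      by (auto simp: response_def)
    then have "choose_lift (C k \<inter> nbhd (witness x C n k) (Suc n)) (x (Suc n)) \<in> C k \<and>
        pi0 (choose_lift (C k \<inter> nbhd (witness x C n k) (Suc n)) (x (Suc n))) = x (Suc n)"
      using choose_lift by blast
    with True show ?thesis by simp
  next
    case False
    with Suc.prems(2) have "k = Suc n" by simp
    with \<open>x (Suc n) \<in> pi0 ` C (Suc n)\<close> show ?thesis using choose_lift[of "x (Suc n)"] by auto
  qed
qed

lemma witness_Suc_nbhd:
  assumes "\<And>i. i \<le> Suc n \<Longrightarrow> consistent_move x C i" "k \<le> n"
  shows "witness x C (Suc n) k \<in> nbhd (witness x C n k) (Suc n)"
proof -
  have "x (Suc n) \<in> response x C n" using assms(1)[of "Suc n"] by (simp add: consistent_move_def)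
  then have "x (Suc n) \<in> pi0 ` (C k \<inter> nbhd (witness x C n k) (Suc n))"
    using assms(2) by (auto simp: response_def)
  then have "choose_lift (C k \<inter> nbhd (witness x C n k) (Suc n)) (x (Suc n))
      \<in> nbhd (witness x C n k) (Suc n)"
    using choose_lift by blast
  with assms(2) show ?thesis by simp
qed

lemma witness_T_inf:
  assumes "\<And>i. i \<le> n \<Longrightarrow> consistent_move x C i" "k \<le> n"
  shows "witness x C n k \<in> times_T_inf A"
proof -
  have "rel_closed (C k)" using assms by (simp add: consistent_move_def)
  then show ?thesis using witness_lifts[OF assms] rel_closed_subset by blast
qed

lemma witness_in_nbhd:
  assumes "\<And>i. i \<le> n \<Longrightarrow> consistent_move x C i" "k \<le> n"
  shows "witness x C n k \<in> nbhd (witness x C n k) j"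
  using witness_T_inf[OF assms] by (simp add: nbhd_def basic_nbhd_def times_T_inf_def)

lemma x_in_response:
  assumes "\<And>i. i \<le> n \<Longrightarrow> consistent_move x C i"
  shows "x n \<in> response x C n"
  unfolding response_def
proof
  fix k assume "k \<in> {..n}"
  then have "k \<le> n" by simp
  show "x n \<in> pi0 ` (C k \<inter> nbhd (witness x C n k) (Suc n))"
  proof (rule image_eqI)
    show "x n = pi0 (witness x C n k)" using witness_lifts[OF assms \<open>k \<le> n\<close>] by simp
    show "witness x C n k \<in> C k \<inter> nbhd (witness x C n k) (Suc n)"
      using witness_lifts[OF assms \<open>k \<le> n\<close>] witness_in_nbhd[OF assms \<open>k \<le> n\<close>] by blast
  qed
qed

lemma witness_stable:
  assumes play: "\<And>i. consistent_move x C i" and "k \<le> n" "n \<le> m"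
  shows "witness x C m k \<in> nbhd (witness x C n k) (Suc n)"
  using \<open>n \<le> m\<close>
proof (induction m rule: dec_induct)
  case base
  show ?case using witness_in_nbhd play \<open>k \<le> n\<close> by blast
next
  case (step m)
  have "witness x C (Suc m) k \<in> nbhd (witness x C m k) (Suc m)"
    using witness_Suc_nbhd play step.hyps \<open>k \<le> n\<close> by simp
  also have "\<dots> \<subseteq> nbhd (witness x C m k) (Suc n)"
    using step.hyps by (intro nbhd_antimono) simp
  also have "\<dots> = nbhd (witness x C n k) (Suc n)"
    using step.IH by (rule nbhd_eq)
  finally show ?case .
qed

definition limit :: "(nat \<Rightarrow> tree) \<Rightarrow> (nat \<Rightarrow> tree set) \<Rightarrow> nat \<Rightarrow> tree" where
  "limit x C k = (\<lambda>u. witness x C (max k (length u)) k u)"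

lemma limit_eq_witness:
  assumes play: "\<And>i. consistent_move x C i" and "k \<le> m" "length u \<le> m"
  shows "limit x C k u = witness x C m k u"
proof -
  define p where "p = max k (length u)"
  have "witness x C m k \<in> nbhd (witness x C p k) (Suc p)"
    using witness_stable[OF play] assms p_def by simp
  moreover have "u \<in> few_ones (Suc p) (pi1 (witness x C p k))"
    using few_ones_short p_def by simp
  ultimately show ?thesis by (simp add: limit_def p_def nbhd_def basic_nbhd_def)
qed

lemma limit_trees:
  assumes play: "\<And>i. consistent_move x C i"
  shows "limit x C k \<in> trees A2"
  using witness_T_inf[OF play] by (simp add: limit_def trees_def times_T_inf_def)

lemma limit_nbhd:
  assumes play: "\<And>i. consistent_move x C i" and "k \<le> n"
  shows "limit x C k \<in> nbhd (witness x C n k) (Suc n)"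
proof -
  have "limit x C k u = witness x C n k u"
    if "u \<in> few_ones (Suc n) (pi1 (witness x C n k))" for u
  proof -
    define m where "m = max n (length u)"
    have "witness x C m k \<in> nbhd (witness x C n k) (Suc n)"
      using witness_stable[OF play \<open>k \<le> n\<close>] m_def by simp
    with that have "witness x C m k u = witness x C n k u"
      by (simp add: nbhd_def basic_nbhd_def)
    moreover have "limit x C k u = witness x C m k u"
      using limit_eq_witness[OF play] \<open>k \<le> n\<close> m_def by simp
    ultimately show ?thesis by simp
  qed
  then show ?thesis using limit_trees[OF play] by (simp add: nbhd_def basic_nbhd_def)
qed

lemma limit_T_inf:
  assumes play: "\<And>i. consistent_move x C i"
  shows "limit x C k \<in> times_T_inf A"
proof -
  have "finite (few_ones j (pi1 (limit x C k)))" for j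
  proof -
    define n where "n = max k j"
    have "witness x C n k \<in> times_T_inf A"
      using witness_T_inf[OF play] n_def by simp
    then have "finite (few_ones (Suc n) (pi1 (witness x C n k)))"
      by (simp add: times_T_inf_def T_inf_iff_few_ones_finite)
    moreover have "few_ones (Suc n) (pi1 (limit x C k)) = few_ones (Suc n) (pi1 (witness x C n k))"
      using limit_nbhd[OF play] n_def by (simp add: few_ones_pi1_eq)
    moreover have "few_ones j (pi1 (limit x C k)) \<subseteq> few_ones (Suc n) (pi1 (limit x C k))"
      using n_def by (intro few_ones_mono) simp
    ultimately show ?thesis using finite_subset by metis
  qed
  moreover have "pi1 (limit x C k) \<in> trees two"
    using limit_trees[OF play] by (rule trees_prod_alph_pi1)
  ultimately show ?thesis
    using limit_trees[OF play] by (simp add: times_T_inf_def T_inf_iff_few_ones_finite)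
qed

lemma limit_in:
  assumes play: "\<And>i. consistent_move x C i"
  shows "limit x C k \<in> C k"
proof -
  obtain F where F: "cantor_closed A2 F" "C k = F \<inter> times_T_inf A"
    using play[of k] by (auto simp: consistent_move_def rel_closed_def)
  have "\<exists>f\<in>F. \<forall>u. length u < n \<longrightarrow> f u = limit x C k u" for n
  proof
    define m where "m = max k n"
    show "witness x C m k \<in> F"
      using witness_lifts[OF play] F(2) m_def by auto
    show "\<forall>u. length u < n \<longrightarrow> witness x C m k u = limit x C k u"
      using limit_eq_witness[OF play, of k m] m_def by simp
  qed
  then have "limit x C k \<in> F"
    using F(1) limit_trees[OF play] unfolding cantor_closed_def by blast
  with F(2) show ?thesis using limit_T_inf[OF play] by blast
qed

lemma limit_pi0:
  assumes play: "\<And>i. consistent_move x C i"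
  shows "pi0 (limit x C k) = pi0 (limit x C 0)"
proof
  fix u :: "bool list"
  define m where "m = max k (length u)"
  have "pi0 (witness x C m k) = pi0 (witness x C m 0)"
    using witness_lifts[OF play] m_def by simp
  then show "pi0 (limit x C k) u = pi0 (limit x C 0) u"
    using limit_eq_witness[OF play, of k m u] limit_eq_witness[OF play, of 0 m u] m_def
    by (simp add: pi0_def fun_eq_iff)
qed

lemma limit_in_response:
  assumes play: "\<And>i. consistent_move x C i"
  shows "pi0 (limit x C 0) \<in> response x C n"
  unfolding response_def
proof
  fix k assume "k \<in> {..n}"
  then have "limit x C k \<in> C k \<inter> nbhd (witness x C n k) (Suc n)"
    using limit_in[OF play] limit_nbhd[OF play] by simp
  then show "pi0 (limit x C 0) \<in> pi0 ` (C k \<inter> nbhd (witness x C n k) (Suc n))"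
    using limit_pi0[OF play] by (metis image_eqI)
qed

end

lemma INT_atMost_closed:
  fixes n :: nat
  assumes "\<And>L M. L \<in> S \<Longrightarrow> M \<in> S \<Longrightarrow> L \<inter> M \<in> S" "\<And>k. k \<le> n \<Longrightarrow> f k \<in> S"
  shows "(\<Inter>k\<le>n. f k) \<in> S"
  using assms(2)
proof (induction n)
  case 0 then show ?case by simp
next
  case (Suc n)
  then show ?case using assms(1) by (simp add: atMost_Suc)
qed

locale choquet_setting = tree_fusion A for A +
  fixes X :: "tree topology" and BA B2 :: "tree set set"
  assumes topspace: "topspace X = trees A"
    and nonempty: "A \<noteq> {}"
    and basis: "is_basis_of BA X"
    and basic_nbhd_in_B2: "finite_tree A2 D s \<Longrightarrow> basic_nbhd A2 D s \<in> B2"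
    and Int_in_B2: "L \<in> B2 \<Longrightarrow> M \<in> B2 \<Longrightarrow> L \<inter> M \<in> B2"
    and Int_in_BA: "L \<in> BA \<Longrightarrow> M \<in> BA \<Longrightarrow> L \<inter> M \<in> BA"
    and pi0_image_in_BA: "L \<in> B2 \<Longrightarrow> pi0 ` L \<in> BA"
    and BA_rel_closed_image: "L \<in> BA \<Longrightarrow> \<exists>C\<in>B2. rel_closed C \<and> L = pi0 ` C"
begin

definition cover :: "tree \<Rightarrow> tree set \<Rightarrow> tree set" where
  "cover y U = (SOME C. C \<in> B2 \<and> rel_closed C \<and> y \<in> pi0 ` C \<and> pi0 ` C \<subseteq> U)"

lemma cover:
  assumes "openin X U" "y \<in> U"
  shows "cover y U \<in> B2 \<and> rel_closed (cover y U) \<and> y \<in> pi0 ` cover y U \<and> pi0 ` cover y U \<subseteq> U"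
proof -
  obtain \<F> where "\<F> \<subseteq> BA" "\<Union>\<F> = U"
    using basis assms(1) by (auto simp: is_basis_of_def)
  with assms(2) obtain L where "L \<in> BA" "y \<in> L" "L \<subseteq> U" by blast
  then obtain C where "C \<in> B2 \<and> rel_closed C \<and> y \<in> pi0 ` C \<and> pi0 ` C \<subseteq> U"
    using BA_rel_closed_image by blast
  then show ?thesis
    unfolding cover_def by (rule someI[where P = "\<lambda>C. C \<in> B2 \<and> rel_closed C \<and> y \<in> pi0 ` C \<and> pi0 ` C \<subseteq> U"])
qed

lemma nbhd_in_B2:
  assumes "z \<in> times_T_inf A"
  shows "nbhd z j \<in> B2"
  unfolding nbhd_def
proof (rule basic_nbhd_in_B2)
  show "finite_tree A2 (few_ones j (pi1 z)) z"
    using assms few_ones_prefix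
    by (auto simp: finite_tree_def times_T_inf_def T_inf_iff_few_ones_finite trees_def)
qed

lemma response_in_BA:
  assumes "\<And>i. i \<le> n \<Longrightarrow> consistent_move x C i \<and> C i \<in> B2"
  shows "response x C n \<in> BA"
  unfolding response_def
proof (rule INT_atMost_closed[OF Int_in_BA])
  fix k assume "k \<le> n"
  have "witness x C n k \<in> times_T_inf A"
    using witness_T_inf assms \<open>k \<le> n\<close> by blast
  then have "C k \<inter> nbhd (witness x C n k) (Suc n) \<in> B2"
    using assms \<open>k \<le> n\<close> by (intro Int_in_B2 nbhd_in_B2) auto
  then show "pi0 ` (C k \<inter> nbhd (witness x C n k) (Suc n)) \<in> BA"
    by (rule pi0_image_in_BA)
qed

definition strategy :: "(tree \<times> tree set) list \<Rightarrow> tree set" where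
  "strategy h = response (\<lambda>i. fst (h ! i)) (\<lambda>i. cover (fst (h ! i)) (snd (h ! i))) (length h - 1)"

lemma strategy_history:
  "strategy (map (\<lambda>i. (x i, U i)) [0..<Suc n]) = response x (\<lambda>i. cover (x i) (U i)) n"
  unfolding strategy_def
  by (simp del: upt_Suc) (rule response_cong; simp del: upt_Suc add: nth_map_upt)

lemma legal_move_consistent:
  assumes "openin X (U i)" "x i \<in> U i"
    and "\<forall>m. i = Suc m \<longrightarrow> U i \<subseteq> response x (\<lambda>i. cover (x i) (U i)) m"
  shows "consistent_move x (\<lambda>i. cover (x i) (U i)) i"
  using assms cover[OF assms(1,2)] by (auto simp: consistent_move_def)

lemma response_wins:
  fixes x :: "nat \<Rightarrow> tree" and U :: "nat \<Rightarrow> tree set"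
  defines "C \<equiv> \<lambda>i. cover (x i) (U i)"
  shows "(\<forall>n. (\<forall>i\<le>n. openin X (U i) \<and> x i \<in> U i \<and> (\<forall>m. i = Suc m \<longrightarrow> U i \<subseteq> response x C m))
           \<longrightarrow> openin X (response x C n) \<and> x n \<in> response x C n \<and> response x C n \<subseteq> U n) \<and>
        ((\<forall>n. openin X (U n) \<and> x n \<in> U n \<and> (\<forall>m. n = Suc m \<longrightarrow> U n \<subseteq> response x C m))
           \<longrightarrow> \<Inter> (range (response x C)) \<noteq> {})"
proof (intro conjI allI impI)
  fix n
  assume legal: "\<forall>i\<le>n. openin X (U i) \<and> x i \<in> U i \<and> (\<forall>m. i = Suc m \<longrightarrow> U i \<subseteq> response x C m)"
  then have consistent: "consistent_move x C i \<and> C i \<in> B2" if "i \<le> n" for i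
    using that legal_move_consistent cover C_def by auto
  show "openin X (response x C n)"
    using response_in_BA[OF consistent] basis by (auto simp: is_basis_of_def)
  show "x n \<in> response x C n"
    using x_in_response consistent by blast
  have "pi0 ` C n \<subseteq> U n"
    using cover[of "U n" "x n"] legal C_def by simp
  then show "response x C n \<subseteq> U n"
    using response_subset by blast
next
  assume "\<forall>n. openin X (U n) \<and> x n \<in> U n \<and> (\<forall>m. n = Suc m \<longrightarrow> U n \<subseteq> response x C m)"
  then have "consistent_move x C i" for i
    using legal_move_consistent C_def by auto
  then show "\<Inter> (range (response x C)) \<noteq> {}"
    using limit_in_response by blast
qed

theorem strong_choquet: "strong_choquet X"
proof -
  obtain a where "a \<in> A" using nonempty by blast
  then have "topspace X \<noteq> {}" using topspace by (auto simp: trees_def)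
  then show ?thesis
    unfolding strong_choquet_def Let_def using response_wins
    by (intro conjI exI[of _ strategy]; simp only: strategy_history) blast+
qed

end

theorem theorem4p1:
  fixes \<tau> :: "nat set \<Rightarrow> tree topology"
    and B :: "nat set \<Rightarrow> tree set set"
  assumes top: "\<And>A. finite A \<Longrightarrow> 2 \<le> card A \<Longrightarrow> topspace (\<tau> A) = trees A"
    and basis: "\<And>A. finite A \<Longrightarrow> 2 \<le> card A \<Longrightarrow> is_basis_of (B A) (\<tau> A)"
    and P1: "\<And>A D s. finite A \<Longrightarrow> 2 \<le> card A \<Longrightarrow> finite_tree A D s \<Longrightarrow>
               basic_nbhd A D s \<in> B A"
    and P2: "\<And>A L M. finite A \<Longrightarrow> 2 \<le> card A \<Longrightarrow> L \<in> B A \<Longrightarrow> M \<in> B A \<Longrightarrow>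
               L \<union> M \<in> B A \<and> L \<inter> M \<in> B A"
    and P3: "\<And>A G L. finite A \<Longrightarrow> 2 \<le> card A \<Longrightarrow> finite G \<Longrightarrow> 2 \<le> card G \<Longrightarrow>
               L \<in> B (prod_alph A G) \<Longrightarrow> pi0 ` L \<in> B A"
    and P4: "\<And>A L. finite A \<Longrightarrow> 2 \<le> card A \<Longrightarrow> L \<in> B A \<Longrightarrow>
               \<exists>C \<in> B (prod_alph A two). C \<subseteq> times_T_inf A \<and>
                 (\<exists>F. cantor_closed (prod_alph A two) F \<and> C = F \<inter> times_T_inf A) \<and>
                 L = pi0 ` C"
  shows "\<forall>A. finite A \<and> 2 \<le> card A \<longrightarrow> strong_choquet (\<tau> A)"
proof (intro allI impI)
  fix A :: "nat set"
  assume A: "finite A \<and> 2 \<le> card A"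
  have two: "finite two" "card two = 2" by (simp_all add: two_def)
  have "card (prod_alph A two) = card A * card two"
    unfolding prod_alph_def by (simp add: card_image inj_on_def card_cartesian_product)
  with A two have A2: "finite (prod_alph A two)" "2 \<le> card (prod_alph A two)"
    by (simp_all add: prod_alph_def)
  have "A \<noteq> {}" using A by auto
  then interpret choquet_setting A "\<tau> A" "B A" "B (prod_alph A two)"
  proof unfold_locales
    fix D s L M
    show "topspace (\<tau> A) = trees A" "is_basis_of (B A) (\<tau> A)"
      using A top basis by simp_all
    show "finite_tree (prod_alph A two) D s \<Longrightarrow> basic_nbhd (prod_alph A two) D s \<in> B (prod_alph A two)"
      using A2 P1 by simp
    show "L \<in> B (prod_alph A two) \<Longrightarrow> M \<in> B (prod_alph A two) \<Longrightarrow> L \<inter> M \<in> B (prod_alph A two)"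
      using A2 P2 by simp
    show "L \<in> B A \<Longrightarrow> M \<in> B A \<Longrightarrow> L \<inter> M \<in> B A"
      using A P2 by simp
    show "L \<in> B (prod_alph A two) \<Longrightarrow> pi0 ` L \<in> B A"
      using A two P3 by simp
    show "L \<in> B A \<Longrightarrow> \<exists>C\<in>B (prod_alph A two). tree_fusion.rel_closed A C \<and> L = pi0 ` C"
      using A P4[of A L] unfolding tree_fusion.rel_closed_def by blast
  qed
  show "strong_choquet (\<tau> A)" by (rule strong_choquet)
qed

end
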